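(* Let $H$ be a complex infinite-dimensional separable Hilbert space, and let $(f_n)_{n=1}^\infty$ and $(g_n)_{n=1}^\infty$ be Bessel sequences in $H$ with optimal Bessel bounds $B$ and $D$ and analysis operators $U$ and $V$, respectively. Suppose $I-V^*U$ is a compact operator on $H$. Then there exist finite sequences $(x_n)_{n=1}^k$ and $(y_n)_{n=1}^l$ in $H$ such that $(x_n)_{n=1}^k\cup(f_n)_{n=1}^\infty$ is a frame for $H$ with optimal upper frame bound $B$, and $(y_n)_{n=1}^l\cup(g_n)_{n=1}^\infty$ is a frame for $H$ with optimal upper frame bound $D$.
   Context: A Bessel sequence $(f_n)$ in $H$: there is $B>0$ with $\sum_n|\langle x,f_n\rangle|^2\le B\|x\|^2$ for all $x$; the optimal Bessel bound is the infimum of all such $B$. A frame additionally has a lower bound $A>0$ with $A\|x\|^2\le\sum_n|\langle x,f_n\rangle|^2$; the optimal upper frame bound is the infimum of upper bounds. The analysis operator is $U:H\to\ell^2$, $Ux=(\langle x,f_n\rangle)_n$. The notation $(x_n)_{n=1}^k\cup(f_n)_{n=1}^\infty$ denotes the sequence $x_1,\dots,x_k,f_1,f_2,\dots$. *)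

theory Defs
  imports "HOL-Analysis.Analysis"
begin

class complex_vector = real_vector +
  fixes scaleC :: "complex \<Rightarrow> 'a \<Rightarrow> 'a"
  assumes scaleC_add_right: "scaleC a (x + y) = scaleC a x + scaleC a y"
    and scaleC_add_left: "scaleC (a + b) x = scaleC a x + scaleC b x"
    and scaleC_scaleC: "scaleC a (scaleC b x) = scaleC (a * b) x"
    and scaleC_one: "scaleC 1 x = x"
    and scaleR_scaleC: "scaleR r x = scaleC (complex_of_real r) x"

class complex_inner = complex_vector + real_normed_vector +
  fixes cinner :: "'a \<Rightarrow> 'a \<Rightarrow> complex"
  assumes cinner_commute: "cinner x y = cnj (cinner y x)"
    and cinner_add_left: "cinner (x + y) z = cinner x z + cinner y z"
    and cinner_scaleC_left: "cinner (scaleC r x) y = cnj r * cinner x y"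
    and cinner_self_real: "Im (cinner x x) = 0"
    and cinner_self_nonneg: "0 \<le> Re (cinner x x)"
    and cinner_eq_zero_iff: "cinner x x = 0 \<longleftrightarrow> x = 0"
    and norm_eq_sqrt_cinner: "norm x = sqrt (Re (cinner x x))"

definition cspan :: "'a::complex_vector set \<Rightarrow> 'a set" where
  "cspan S = {(\<Sum>v\<in>F. scaleC (c v) v) | F c. finite F \<and> F \<subseteq> S}"

definition infinite_dimensional :: "'a::complex_vector itself \<Rightarrow> bool" where
  "infinite_dimensional _ \<longleftrightarrow> (\<forall>S::'a set. finite S \<longrightarrow> cspan S \<noteq> UNIV)"

definition separable_hilbert :: "'a::metric_space itself \<Rightarrow> bool" where
  "separable_hilbert _ \<longleftrightarrow> (\<exists>D::'a set. countable D \<and> closure D = UNIV)"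

text \<open>The paper's \<open>\<langle>x, f n\<rangle>\<close> (linear in x) is \<open>cinner (f n) x\<close> here.\<close>
definition bessel_bound :: "(nat \<Rightarrow> 'a::complex_inner) \<Rightarrow> real \<Rightarrow> bool" where
  "bessel_bound f B \<longleftrightarrow> B > 0 \<and>
     (\<forall>x. summable (\<lambda>n. (cmod (cinner (f n) x))\<^sup>2) \<and>
          (\<Sum>n. (cmod (cinner (f n) x))\<^sup>2) \<le> B * (norm x)\<^sup>2)"

definition bessel_seq :: "(nat \<Rightarrow> 'a::complex_inner) \<Rightarrow> bool" where
  "bessel_seq f \<longleftrightarrow> (\<exists>B. bessel_bound f B)"

text \<open>Optimal Bessel bound = optimal upper frame bound: infimum of all upper bounds.\<close>
definition opt_bessel_bound :: "(nat \<Rightarrow> 'a::complex_inner) \<Rightarrow> real" where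
  "opt_bessel_bound f = Inf {B. bessel_bound f B}"

definition is_frame :: "(nat \<Rightarrow> 'a::complex_inner) \<Rightarrow> bool" where
  "is_frame f \<longleftrightarrow> bessel_seq f \<and>
     (\<exists>A>0. \<forall>x. A * (norm x)\<^sup>2 \<le> (\<Sum>n. (cmod (cinner (f n) x))\<^sup>2))"

text \<open>\<open>V\<^sup>* U x = \<Sum>n \<langle>x, f n\<rangle> g n\<close> for analysis operators U of f and V of g.\<close>
definition synth_anal :: "(nat \<Rightarrow> 'a::complex_inner) \<Rightarrow> (nat \<Rightarrow> 'a) \<Rightarrow> 'a \<Rightarrow> 'a" where
  "synth_anal g f x = (\<Sum>n. scaleC (cinner (f n) x) (g n))"

definition compact_operator :: "('a::metric_space \<Rightarrow> 'b::metric_space) \<Rightarrow> bool" where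
  "compact_operator T \<longleftrightarrow> (\<forall>S. bounded S \<longrightarrow> compact (closure (T ` S)))"

text \<open>The sequence \<open>x\<^sub>1,\<dots>,x\<^sub>k, f\<^sub>1, f\<^sub>2, \<dots>\<close> (0-indexed here).\<close>
definition prepend :: "'a list \<Rightarrow> (nat \<Rightarrow> 'a) \<Rightarrow> nat \<Rightarrow> 'a" where
  "prepend xs f n = (if n < length xs then xs ! n else f (n - length xs))"

end

theory Submission
  imports Defs
begin

text \<open>Let \<open>K = I - V\<^sup>* U\<close>. On the kernel \<open>N\<close> of \<open>U\<close> the operator \<open>K\<close> is the identity, so
  compactness of \<open>K\<close> makes \<open>N\<close> finite dimensional. Moreover \<open>U\<close> is bounded below on the
  orthogonal complement of \<open>N\<close>: if unit vectors \<open>y\<^sub>n\<close> there satisfy \<open>U y\<^sub>n \<rightarrow> 0\<close>, then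
  \<open>V\<^sup>* U y\<^sub>n \<rightarrow> 0\<close>, so a subsequence of \<open>y\<^sub>n = K y\<^sub>n + V\<^sup>* U y\<^sub>n\<close> converges, to a unit vector
  of \<open>N\<close> orthogonal to \<open>N\<close>; so \<open>c \<parallel>y\<parallel>\<^sup>2 \<le> \<parallel>U y\<parallel>\<^sup>2\<close> on \<open>N\<^sup>\<bottom>\<close> for some \<open>c > 0\<close>. Prepending \<open>\<surd>B e\<^sub>1, \<dots>, \<surd>B e\<^sub>k\<close> for an orthonormal basis of \<open>N\<close>
  turns the frame sum into \<open>B \<parallel>P x\<parallel>\<^sup>2 + \<parallel>U (x - P x)\<parallel>\<^sup>2\<close>, \<open>P\<close> the projection onto \<open>N\<close>, which
  lies between \<open>min B c \<parallel>x\<parallel>\<^sup>2\<close> and \<open>B \<parallel>x\<parallel>\<^sup>2\<close>; \<open>B\<close> stays optimal since the frame sum only grew.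
  As \<open>I - U\<^sup>* V = K\<^sup>*\<close> is compact too, the same works for \<open>g\<close>. Infinite dimensionality only
  serves to guarantee \<open>f \<noteq> 0\<close>, i.e. \<open>B > 0\<close>.\<close>

section \<open>Complex inner product spaces\<close>

lemma cinner_zero_left [simp]: "cinner 0 (y::'a::complex_inner) = 0"
  using cinner_add_left[of "0::'a" 0 y] by simp

lemma cinner_zero_right [simp]: "cinner (x::'a::complex_inner) 0 = 0"
  using cinner_commute[of x 0] by simp

lemma cinner_add_right: "cinner (x::'a::complex_inner) (y + z) = cinner x y + cinner x z"
  using cinner_commute[of x "y + z"] cinner_commute[of x y] cinner_commute[of x z]
  by (simp add: cinner_add_left)

lemma cinner_minus_left: "cinner (- x::'a::complex_inner) y = - cinner x y"
  using cinner_add_left[of x "- x" y] by (simp add: add_eq_0_iff)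

lemma cinner_diff_left: "cinner (x - x'::'a::complex_inner) y = cinner x y - cinner x' y"
  by (simp only: diff_conv_add_uminus cinner_add_left cinner_minus_left)

lemma cinner_diff_right: "cinner (x::'a::complex_inner) (y - y') = cinner x y - cinner x y'"
  using cinner_commute[of x "y - y'"] cinner_commute[of x y] cinner_commute[of x y']
  by (simp add: cinner_diff_left)

lemma cinner_scaleC_right: "cinner (x::'a::complex_inner) (scaleC r y) = r * cinner x y"
  using cinner_commute[of x "scaleC r y"] cinner_commute[of x y] by (simp add: cinner_scaleC_left)

lemma cinner_scaleR_left: "cinner (scaleR r x::'a::complex_inner) y = of_real r * cinner x y"
  by (simp add: scaleR_scaleC cinner_scaleC_left)

lemma cinner_scaleR_right: "cinner (x::'a::complex_inner) (scaleR r y) = of_real r * cinner x y"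
  by (simp add: scaleR_scaleC cinner_scaleC_right)

lemma cinner_sum_left: "cinner (sum h A::'a::complex_inner) y = (\<Sum>a\<in>A. cinner (h a) y)"
  by (induction A rule: infinite_finite_induct) (auto simp: cinner_add_left)

lemma cinner_sum_right: "cinner (y::'a::complex_inner) (sum h A) = (\<Sum>a\<in>A. cinner y (h a))"
  by (induction A rule: infinite_finite_induct) (auto simp: cinner_add_right)

lemma scaleC_zero_left [simp]: "scaleC 0 (x::'a::complex_vector) = 0"
  using scaleC_add_left[of 0 0 x] by simp

lemma cinner_self: "cinner (x::'a::complex_inner) x = complex_of_real ((norm x)\<^sup>2)"
proof -
  have "(norm x)\<^sup>2 = Re (cinner x x)"
    using norm_eq_sqrt_cinner[of x] cinner_self_nonneg[of x] by simp
  then show ?thesis using cinner_self_real[of x] by (simp add: complex_eq_iff)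
qed

lemma norm_cinner_commute: "cmod (cinner (x::'a::complex_inner) y) = cmod (cinner y x)"
  using cinner_commute[of x y] by simp

lemma norm_scaleC: "norm (scaleC a (x::'a::complex_inner)) = cmod a * norm x"
proof -
  have "complex_of_real ((norm (scaleC a x))\<^sup>2) = complex_of_real ((cmod a * norm x)\<^sup>2)"
    by (simp only: cinner_self[symmetric] cinner_scaleC_left cinner_scaleC_right)
       (simp add: cinner_self power_mult_distrib complex_norm_square[symmetric] mult.assoc
         complex_mult_cnj[symmetric] mult.commute mult.left_commute del: of_real_power)
  then have "(norm (scaleC a x))\<^sup>2 = (cmod a * norm x)\<^sup>2"
    using of_real_eq_iff by blast
  then show ?thesis by (simp add: power2_eq_iff_nonneg)
qed

lemma norm_scaleC_inverse_norm:
  "x \<noteq> 0 \<Longrightarrow> norm (scaleC (of_real (inverse (norm x))) (x::'a::complex_inner)) = 1"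
  by (simp add: norm_scaleC norm_inverse)

lemma norm_cinner_le: "cmod (cinner (x::'a::complex_inner) y) \<le> norm x * norm y"
proof (cases "x = 0")
  case True
  then show ?thesis by simp
next
  case False
  define a where "a = cinner x y"
  define n where "n = (norm x)\<^sup>2"
  have n: "n > 0" using False by (simp add: n_def)
  define t where "t = a / complex_of_real n"
  define w where "w = y - scaleC t x"
  have "cinner w w = cinner y y - t * cinner y x - cnj t * cinner x y + cnj t * t * cinner x x"
    unfolding w_def
    by (simp add: cinner_diff_left cinner_diff_right cinner_scaleC_left cinner_scaleC_right
        algebra_simps)
  also have "\<dots> = complex_of_real ((norm y)\<^sup>2 - (cmod a)\<^sup>2 / n)"
    using n unfolding t_def
    apply (simp only: cinner_self n_def[symmetric] a_def[symmetric] cinner_commute[of y x])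
    apply (simp add: field_simps complex_norm_square[of a] power2_eq_square
        complex_mult_cnj[symmetric] del: of_real_power)
    using complex_norm_square[of a] by (simp only: power2_eq_square of_real_mult)
  finally have "0 \<le> (norm y)\<^sup>2 - (cmod a)\<^sup>2 / n"
    using cinner_self_nonneg[of w] by simp
  then have "(cmod a)\<^sup>2 \<le> (norm x * norm y)\<^sup>2"
    using n by (simp add: n_def field_simps power_mult_distrib)
  then show ?thesis unfolding a_def by (rule power2_le_imp_le) simp
qed

lemma bounded_linear_cinner_right: "bounded_linear (\<lambda>x. cinner (a::'a::complex_inner) x)"
proof (rule bounded_linear_intro[where K = "norm a"])
  show "cinner a (x + y) = cinner a x + cinner a y" for x y
    by (rule cinner_add_right)
  show "cinner a (r *\<^sub>R x) = r *\<^sub>R cinner a x" for r x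
    by (simp add: cinner_scaleR_right scaleR_conv_of_real)
  show "norm (cinner a x) \<le> norm x * norm a" for x
    using norm_cinner_le[of a x] by (simp add: mult.commute)
qed

lemma bounded_linear_cinner_left: "bounded_linear (\<lambda>x. cinner x (a::'a::complex_inner))"
proof (rule bounded_linear_intro[where K = "norm a"])
  show "cinner (x + y) a = cinner x a + cinner y a" for x y
    by (rule cinner_add_left)
  show "cinner (r *\<^sub>R x) a = r *\<^sub>R cinner x a" for r x
    by (simp add: cinner_scaleR_left scaleR_conv_of_real)
  show "norm (cinner x a) \<le> norm x * norm a" for x
    using norm_cinner_le[of x a] by simp
qed

lemma norm_add_Pythagorean_cinner:
  assumes "cinner a b = 0"
  shows "(norm (a + b::'a::complex_inner))\<^sup>2 = (norm a)\<^sup>2 + (norm b)\<^sup>2"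
proof -
  have "cinner b a = 0" using assms cinner_commute[of b a] by simp
  then have "cinner (a + b) (a + b) = cinner a a + cinner b b"
    using assms by (simp add: cinner_add_left cinner_add_right)
  then show ?thesis by (simp add: cinner_self del: of_real_power) (metis of_real_add of_real_eq_iff)
qed

lemma cinner_eq_zero_if_orthogonal_all:
  "(\<And>u. cinner u (d::'a::complex_inner) = 0) \<Longrightarrow> d = 0"
  using cinner_eq_zero_iff by blast

text \<open>The library's \<open>summable_Cauchy\<close> needs sort \<open>banach\<close>, which the sort
  \<open>{real_normed_vector, complete_space}\<close> does not entail.\<close>
lemma summable_if_Cauchy_tails:
  fixes f :: "nat \<Rightarrow> 'a::{real_normed_vector, complete_space}"
  assumes "\<And>e. e > 0 \<Longrightarrow> \<exists>N. \<forall>m\<ge>N. \<forall>n. norm (sum f {m..<n}) < e"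
  shows "summable f"
  unfolding summable_iff_convergent Cauchy_convergent_iff[symmetric] Cauchy_iff
proof (intro allI impI)
  fix e :: real
  assume "e > 0"
  then obtain N where N: "\<And>m n. m \<ge> N \<Longrightarrow> norm (sum f {m..<n}) < e"
    using assms by blast
  have "norm (sum f {..<m} - sum f {..<n}) < e" if "m \<ge> N" "n \<ge> N" for m n
  proof (cases m n rule: le_cases)
    case le
    then show ?thesis
      using N[OF \<open>m \<ge> N\<close>, of n] sum_diff_nat_ivl[of 0 m n f]
      by (simp add: atLeast0LessThan) (metis norm_minus_commute)
  next
    case ge
    then show ?thesis
      using N[OF \<open>n \<ge> N\<close>, of m] sum_diff_nat_ivl[of 0 n m f] by (simp add: atLeast0LessThan)
  qed
  then show "\<exists>M. \<forall>m\<ge>M. \<forall>n\<ge>M. norm (sum f {..<m} - sum f {..<n}) < e"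
    by blast
qed

section \<open>Bessel sequences and the synthesis operator\<close>

text \<open>\<open>bessel_sum f x\<close> is \<open>\<parallel>U x\<parallel>\<^sup>2\<close> for the analysis operator \<open>U\<close> of \<open>f\<close>.\<close>
definition bessel_sum :: "(nat \<Rightarrow> 'a::complex_inner) \<Rightarrow> 'a \<Rightarrow> real" where
  "bessel_sum f x = (\<Sum>n. (cmod (cinner (f n) x))\<^sup>2)"

lemma bessel_boundD:
  assumes "bessel_bound f B"
  shows "B > 0" "summable (\<lambda>n. (cmod (cinner (f n) x))\<^sup>2)" "bessel_sum f x \<le> B * (norm x)\<^sup>2"
  using assms unfolding bessel_bound_def bessel_sum_def by auto

lemma summable_bessel_seq: "bessel_seq f \<Longrightarrow> summable (\<lambda>n. (cmod (cinner (f n) x))\<^sup>2)"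
  unfolding bessel_seq_def using bessel_boundD(2) by blast

lemma bessel_sum_nonneg: "bessel_seq f \<Longrightarrow> 0 \<le> bessel_sum f x"
  unfolding bessel_sum_def by (rule suminf_nonneg) (auto dest: summable_bessel_seq)

lemma norm_cinner_sq_le_bessel_sum:
  "bessel_seq f \<Longrightarrow> (cmod (cinner (f m) x))\<^sup>2 \<le> bessel_sum f x"
  unfolding bessel_sum_def using sum_le_suminf[of "\<lambda>n. (cmod (cinner (f n) x))\<^sup>2" "{m}"]
  by (auto dest: summable_bessel_seq)

lemma bessel_sum_scaleC:
  assumes "bessel_seq f"
  shows "bessel_sum f (scaleC a x) = (cmod a)\<^sup>2 * bessel_sum f x"
  unfolding bessel_sum_def
  using suminf_mult[OF summable_bessel_seq[OF assms], of "(cmod a)\<^sup>2"]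
  by (simp add: cinner_scaleC_right norm_mult power_mult_distrib)

lemma norm_sum_scaleC_le:
  fixes g :: "nat \<Rightarrow> 'a::complex_inner"
  assumes g: "bessel_bound g D" and F: "finite F"
  shows "norm (\<Sum>n\<in>F. scaleC (c n) (g n)) \<le> sqrt (D * (\<Sum>n\<in>F. (cmod (c n))\<^sup>2))"
proof -
  define z where "z = (\<Sum>n\<in>F. scaleC (c n) (g n))"
  define L where "L = L2_set (\<lambda>n. cmod (c n)) F"
  have D: "D > 0" using bessel_boundD(1)[OF g] .
  have "cinner z z = (\<Sum>n\<in>F. c n * cinner z (g n))"
    by (simp add: z_def[of] cinner_sum_right cinner_scaleC_right)
  then have "(norm z)\<^sup>2 = cmod (\<Sum>n\<in>F. c n * cinner z (g n))"
    by (metis cinner_self norm_of_real abs_of_nonneg zero_le_power2)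
  also have "\<dots> \<le> (\<Sum>n\<in>F. \<bar>cmod (c n)\<bar> * \<bar>cmod (cinner (g n) z)\<bar>)"
    by (rule order_trans[OF norm_sum]) (simp add: norm_mult norm_cinner_commute)
  also have "\<dots> \<le> L * L2_set (\<lambda>n. cmod (cinner (g n) z)) F"
    unfolding L_def by (rule L2_set_mult_ineq)
  also have "L2_set (\<lambda>n. cmod (cinner (g n) z)) F \<le> sqrt D * norm z"
  proof -
    have "(\<Sum>n\<in>F. (cmod (cinner (g n) z))\<^sup>2) \<le> bessel_sum g z"
      unfolding bessel_sum_def by (rule sum_le_suminf) (use F bessel_boundD(2)[OF g] in auto)
    also have "\<dots> \<le> D * (norm z)\<^sup>2" by (rule bessel_boundD(3)[OF g])
    finally have "L2_set (\<lambda>n. cmod (cinner (g n) z)) F \<le> sqrt (D * (norm z)\<^sup>2)"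
      unfolding L2_set_def by simp
    then show ?thesis by (simp add: real_sqrt_mult)
  qed
  finally have "(norm z)\<^sup>2 \<le> L * (sqrt D * norm z)"
    by (simp add: mult_left_mono L_def L2_set_nonneg)
  then have "norm z \<le> L * sqrt D"
    using D by (cases "z = 0") (simp_all add: L_def L2_set_nonneg power2_eq_square mult.assoc[symmetric])
  then show ?thesis unfolding z_def L_def L2_set_def by (simp add: real_sqrt_mult mult.commute)
qed

lemma summable_scaleC_bessel:
  fixes g :: "nat \<Rightarrow> 'a::{complex_inner, complete_space}"
  assumes g: "bessel_bound g D" and c: "summable (\<lambda>n. (cmod (c n))\<^sup>2)"
  shows "summable (\<lambda>n. scaleC (c n) (g n))"
proof (rule summable_if_Cauchy_tails)
  fix e :: real
  assume e: "e > 0"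
  have D: "D > 0" using bessel_boundD(1)[OF g] .
  have "e\<^sup>2 / D > 0" using e D by simp
  then obtain N where N: "\<forall>m\<ge>N. \<forall>n. norm (\<Sum>k=m..<n. (cmod (c k))\<^sup>2) < e\<^sup>2 / D"
    using c unfolding summable_Cauchy by blast
  have "norm (\<Sum>k=m..<n. scaleC (c k) (g k)) < e" if "m \<ge> N" for m n
  proof -
    have "(\<Sum>k=m..<n. (cmod (c k))\<^sup>2) < e\<^sup>2 / D"
      using N that by (simp add: sum_nonneg)
    then have "sqrt (D * (\<Sum>k=m..<n. (cmod (c k))\<^sup>2)) < e"
      using D e by (intro real_less_lsqrt) (simp_all add: field_simps)
    then show ?thesis
      using norm_sum_scaleC_le[OF g, of "{m..<n}" c] by simp
  qed
  then show "\<exists>N. \<forall>m\<ge>N. \<forall>n. norm (\<Sum>k=m..<n. scaleC (c k) (g k)) < e"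
    by blast
qed

lemma norm_suminf_scaleC_le:
  fixes g :: "nat \<Rightarrow> 'a::{complex_inner, complete_space}"
  assumes g: "bessel_bound g D" and c: "summable (\<lambda>n. (cmod (c n))\<^sup>2)"
  shows "norm (\<Sum>n. scaleC (c n) (g n)) \<le> sqrt (D * (\<Sum>n. (cmod (c n))\<^sup>2))"
proof (rule LIMSEQ_le_const2)
  show "(\<lambda>n. norm (\<Sum>i<n. scaleC (c i) (g i))) \<longlonglongrightarrow> norm (\<Sum>n. scaleC (c n) (g n))"
    by (intro tendsto_norm summable_LIMSEQ summable_scaleC_bessel[OF g c])
  have D: "D > 0" using bessel_boundD(1)[OF g] .
  have "norm (\<Sum>i<n. scaleC (c i) (g i)) \<le> sqrt (D * (\<Sum>n. (cmod (c n))\<^sup>2))" for n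
  proof -
    have "(\<Sum>i<n. (cmod (c i))\<^sup>2) \<le> (\<Sum>n. (cmod (c n))\<^sup>2)"
      by (rule sum_le_suminf[OF c]) auto
    then show ?thesis
      using norm_sum_scaleC_le[OF g, of "{..<n}" c] D by (simp add: order_trans)
  qed
  then show "\<exists>N. \<forall>n\<ge>N. norm (\<Sum>i<n. scaleC (c i) (g i)) \<le> sqrt (D * (\<Sum>n. (cmod (c n))\<^sup>2))"
    by blast
qed

lemma summable_synth_anal:
  fixes g :: "nat \<Rightarrow> 'a::{complex_inner, complete_space}"
  shows "bessel_bound g D \<Longrightarrow> bessel_seq f \<Longrightarrow> summable (\<lambda>n. scaleC (cinner (f n) x) (g n))"
  by (rule summable_scaleC_bessel) (auto dest: summable_bessel_seq)

lemma norm_synth_anal_le: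
  fixes g :: "nat \<Rightarrow> 'a::{complex_inner, complete_space}"
  shows "bessel_bound g D \<Longrightarrow> bessel_seq f \<Longrightarrow> norm (synth_anal g f x) \<le> sqrt (D * bessel_sum f x)"
  unfolding synth_anal_def bessel_sum_def
  by (rule norm_suminf_scaleC_le) (auto dest: summable_bessel_seq)

lemma cinner_synth_anal_left:
  fixes f g :: "nat \<Rightarrow> 'a::{complex_inner, complete_space}"
  assumes f: "bessel_bound f B" and g: "bessel_bound g D"
  shows "cinner (synth_anal g f x) y = cinner x (synth_anal f g y)"
proof -
  have f': "bessel_seq f" and g': "bessel_seq g"
    using f g unfolding bessel_seq_def by blast+
  have "cinner (synth_anal g f x) y = (\<Sum>n. cinner (scaleC (cinner (f n) x) (g n)) y)"
    unfolding synth_anal_def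
    by (rule bounded_linear.suminf[OF bounded_linear_cinner_left summable_synth_anal[OF g f']])
  also have "\<dots> = (\<Sum>n. cinner x (scaleC (cinner (g n) y) (f n)))"
    by (simp add: cinner_scaleC_left cinner_scaleC_right cinner_commute[of "f _" x] mult.commute)
  also have "\<dots> = cinner x (synth_anal f g y)"
    unfolding synth_anal_def
    by (rule bounded_linear.suminf[OF bounded_linear_cinner_right summable_synth_anal[OF f g'],
          symmetric])
  finally show ?thesis .
qed

lemma opt_bessel_bound_le: "bessel_bound f B \<Longrightarrow> opt_bessel_bound f \<le> B"
  unfolding opt_bessel_bound_def
  by (rule cInf_lower) (auto simp: bdd_below_def dest: bessel_boundD(1) intro!: exI[of _ 0])

lemma bessel_sum_le_opt_bessel_bound:
  assumes "bessel_seq f"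
  shows "bessel_sum f x \<le> opt_bessel_bound f * (norm x)\<^sup>2"
proof (cases "x = 0")
  case True
  then show ?thesis by (simp add: bessel_sum_def)
next
  case False
  then have nx: "(norm x)\<^sup>2 > 0" by simp
  have "bessel_sum f x / (norm x)\<^sup>2 \<le> opt_bessel_bound f"
    unfolding opt_bessel_bound_def
  proof (rule cInf_greatest)
    show "{B. bessel_bound f B} \<noteq> {}"
      using assms unfolding bessel_seq_def by blast
    show "bessel_sum f x / (norm x)\<^sup>2 \<le> B" if "B \<in> {B. bessel_bound f B}" for B
      using that bessel_boundD(3)[of f B x] nx by (simp add: divide_le_eq)
  qed
  then show ?thesis using nx by (simp add: divide_le_eq)
qed

lemma bessel_bound_opt_bessel_bound:
  assumes f: "bessel_seq f" and "f m \<noteq> 0"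
  shows "bessel_bound f (opt_bessel_bound f)"
proof -
  have "(norm (f m))\<^sup>2 * (norm (f m))\<^sup>2 = (cmod (cinner (f m) (f m)))\<^sup>2"
    by (simp add: cinner_self norm_power)
  also have "\<dots> \<le> opt_bessel_bound f * (norm (f m))\<^sup>2"
    using norm_cinner_sq_le_bessel_sum[OF f] bessel_sum_le_opt_bessel_bound[OF f] by (rule order_trans)
  finally have "(norm (f m))\<^sup>2 * (norm (f m))\<^sup>2 \<le> opt_bessel_bound f * (norm (f m))\<^sup>2" .
  moreover have pos: "(norm (f m))\<^sup>2 > 0"
    using \<open>f m \<noteq> 0\<close> by simp
  ultimately have "(norm (f m))\<^sup>2 \<le> opt_bessel_bound f"
    by (rule mult_right_le_imp_le)
  with pos have "opt_bessel_bound f > 0"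
    by linarith
  then show ?thesis
    unfolding bessel_bound_def bessel_sum_def[symmetric]
    using summable_bessel_seq[OF f] bessel_sum_le_opt_bessel_bound[OF f] by blast
qed

lemma sums_prepend:
  fixes h :: "'a \<Rightarrow> 'b::real_normed_vector"
  assumes "summable (\<lambda>n. h (f n))"
  shows "(\<lambda>n. h (prepend xs f n)) sums (sum_list (map h xs) + (\<Sum>n. h (f n)))"
proof -
  have "(\<lambda>n. h (prepend xs f (n + length xs))) sums (\<Sum>n. h (f n))"
    using assms by (simp add: prepend_def summable_sums)
  moreover have "(\<Sum>i<length xs. h (prepend xs f i)) = sum_list (map h xs)"
    by (simp add: prepend_def sum_list_sum_nth atLeast0LessThan)
  ultimately show ?thesis
    using sums_iff_shift[of "\<lambda>n. h (prepend xs f n)" "length xs"] by (simp add: add.commute)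
qed

lemma bessel_bound_prependD:
  fixes f :: "nat \<Rightarrow> 'a::complex_inner"
  assumes "bessel_bound (prepend xs f) B"
  shows "bessel_bound f B"
  unfolding bessel_bound_def
proof (intro conjI allI)
  show "B > 0" using bessel_boundD(1)[OF assms] .
  fix x
  let ?h = "\<lambda>v::'a. (cmod (cinner v x))\<^sup>2"
  have "summable (\<lambda>n. ?h (prepend xs f (n + length xs)))"
    using bessel_boundD(2)[OF assms, of x] summable_iff_shift[of "\<lambda>n. ?h (prepend xs f n)"] by simp
  then show f: "summable (\<lambda>n. ?h (f n))"
    by (simp add: prepend_def)
  have "(\<Sum>n. ?h (f n)) \<le> sum_list (map ?h xs) + (\<Sum>n. ?h (f n))"
    by (auto intro!: sum_list_nonneg)
  also have "\<dots> = bessel_sum (prepend xs f) x"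
    unfolding bessel_sum_def using sums_prepend[where h = ?h, OF f] by (simp add: sums_iff)
  also have "\<dots> \<le> B * (norm x)\<^sup>2"
    by (rule bessel_boundD(3)[OF assms])
  finally show "(\<Sum>n. ?h (f n)) \<le> B * (norm x)\<^sup>2" .
qed

lemma sums_prepend_scaled:
  fixes f :: "nat \<Rightarrow> 'a::complex_inner"
  assumes "bessel_seq f" "distinct es" "B \<ge> 0"
  shows "(\<lambda>n. (cmod (cinner (prepend (map (scaleC (of_real (sqrt B))) es) f n) x))\<^sup>2) sums
    (B * (\<Sum>v\<in>set es. (cmod (cinner v x))\<^sup>2) + bessel_sum f x)"
proof -
  have "sum_list (map (\<lambda>v. (cmod (cinner v x))\<^sup>2) (map (scaleC (of_real (sqrt B))) es)) =
      B * (\<Sum>v\<in>set es. (cmod (cinner v x))\<^sup>2)"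
    using assms(2,3) by (simp add: o_def cinner_scaleC_left norm_mult power_mult_distrib
        sum_list_distinct_conv_sum_set sum_distrib_left)
  then show ?thesis
    unfolding bessel_sum_def using sums_prepend[where h = "\<lambda>v. (cmod (cinner v x))\<^sup>2"
        and xs = "map (scaleC (of_real (sqrt B))) es", OF summable_bessel_seq[OF assms(1)]]
    by simp
qed

lemma opt_bessel_bound_prepend:
  assumes "bessel_bound (prepend xs f) (opt_bessel_bound f)"
  shows "opt_bessel_bound (prepend xs f) = opt_bessel_bound f"
  unfolding opt_bessel_bound_def[of "prepend xs f"]
proof (rule cInf_eq_minimum)
  show "opt_bessel_bound f \<in> {B. bessel_bound (prepend xs f) B}"
    using assms by simp
  show "opt_bessel_bound f \<le> B" if "B \<in> {B. bessel_bound (prepend xs f) B}" for B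
    using that by (auto intro: opt_bessel_bound_le bessel_bound_prependD)
qed

definition orthonormal :: "'a::complex_inner set \<Rightarrow> bool" where
  "orthonormal E \<longleftrightarrow> (\<forall>u\<in>E. norm u = 1) \<and> (\<forall>u\<in>E. \<forall>v\<in>E. u \<noteq> v \<longrightarrow> cinner u v = 0)"

definition orth_proj :: "'a::complex_inner set \<Rightarrow> 'a \<Rightarrow> 'a" where
  "orth_proj E x = (\<Sum>v\<in>E. scaleC (cinner v x) v)"

lemma orth_proj_in_cspan: "finite E \<Longrightarrow> orth_proj E x \<in> cspan E"
  unfolding orth_proj_def cspan_def by (intro CollectI exI[of _ E] exI[of _ "\<lambda>v. cinner v x"]) simp

lemma cinner_orth_proj:
  assumes "finite E" "orthonormal E" "u \<in> E"
  shows "cinner u (orth_proj E x) = cinner u x"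
proof -
  have "cinner u (orth_proj E x) = (\<Sum>v\<in>E. cinner v x * cinner u v)"
    by (simp add: orth_proj_def cinner_sum_right cinner_scaleC_right)
  also have "\<dots> = (\<Sum>v\<in>E. if v = u then cinner u x else 0)"
    using assms(2,3) unfolding orthonormal_def by (intro sum.cong) (auto simp: cinner_self)
  also have "\<dots> = cinner u x"
    using assms(1,3) by simp
  finally show ?thesis .
qed

lemma cinner_diff_orth_proj:
  "finite E \<Longrightarrow> orthonormal E \<Longrightarrow> v \<in> E \<Longrightarrow> cinner v (x - orth_proj E x) = 0"
  by (simp add: cinner_diff_right cinner_orth_proj)

lemma cinner_orth_proj_left:
  "cinner (orth_proj E x) w = (\<Sum>v\<in>E. cnj (cinner v x) * cinner v w)"
  unfolding orth_proj_def cinner_sum_left cinner_scaleC_left ..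

lemma norm_sq_orth_proj:
  assumes "finite E" "orthonormal E"
  shows "(norm x)\<^sup>2 = (\<Sum>v\<in>E. (cmod (cinner v x))\<^sup>2) + (norm (x - orth_proj E x))\<^sup>2"
proof -
  have "cinner (orth_proj E x) (orth_proj E x) = (\<Sum>v\<in>E. complex_of_real ((cmod (cinner v x))\<^sup>2))"
    using assms unfolding cinner_orth_proj_left
    by (intro sum.cong) (simp_all add: cinner_orth_proj complex_norm_square mult.commute del: of_real_power)
  then have "(norm (orth_proj E x))\<^sup>2 = (\<Sum>v\<in>E. (cmod (cinner v x))\<^sup>2)"
    unfolding cinner_self of_real_sum[symmetric] of_real_eq_iff .
  moreover have "cinner (orth_proj E x) (x - orth_proj E x) = 0"
    using assms by (simp add: cinner_orth_proj_left cinner_diff_orth_proj)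
  ultimately show ?thesis
    using norm_add_Pythagorean_cinner[of "orth_proj E x" "x - orth_proj E x"] by simp
qed

section \<open>Compact operators\<close>

definition seq_compact_operator :: "('a::real_normed_vector \<Rightarrow> 'a) \<Rightarrow> bool" where
  "seq_compact_operator T \<longleftrightarrow>
     (\<forall>y::nat \<Rightarrow> 'a. bounded (range y) \<longrightarrow> (\<exists>r. strict_mono r \<and> Cauchy (\<lambda>n. T (y (r n)))))"

lemma compact_operator_imp_seq_compact_operator:
  fixes T :: "'a::real_normed_vector \<Rightarrow> 'a"
  assumes "compact_operator T"
  shows "seq_compact_operator T"
  unfolding seq_compact_operator_def
proof (intro allI impI)
  fix y :: "nat \<Rightarrow> 'a"
  assume "bounded (range y)"
  then have "seq_compact (closure (T ` range y))"
    using assms unfolding compact_operator_def by (blast intro: compact_imp_seq_compact)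
  moreover have "\<forall>n. T (y n) \<in> closure (T ` range y)"
    by (intro allI subsetD[OF closure_subset]) simp
  ultimately obtain l r where "strict_mono (r :: nat \<Rightarrow> nat)" "((\<lambda>n. T (y n)) \<circ> r) \<longlonglongrightarrow> l"
    by (rule seq_compactE)
  then show "\<exists>r. strict_mono r \<and> Cauchy (\<lambda>n. T (y (r n)))"
    using LIMSEQ_imp_Cauchy by (auto simp: o_def)
qed

lemma adjoint_diff:
  fixes K Ks :: "'a::complex_inner \<Rightarrow> 'a"
  assumes "\<And>u v. cinner (K u) v = cinner u (Ks v)"
  shows "Ks (a - b) = Ks a - Ks b"
proof (rule cinner_eq_zero_if_orthogonal_all[THEN eq_iff_diff_eq_0[THEN iffD2]])
  show "cinner u (Ks (a - b) - (Ks a - Ks b)) = 0" for u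
    by (simp add: cinner_diff_right flip: assms)
qed

lemma norm_adjoint_sq_le:
  fixes K Ks :: "'a::complex_inner \<Rightarrow> 'a"
  assumes adj: "\<And>u v. cinner (K u) v = cinner u (Ks v)"
  shows "(norm (Ks d))\<^sup>2 \<le> norm (K (Ks d)) * norm d"
proof -
  have "complex_of_real ((norm (Ks d))\<^sup>2) = cinner (K (Ks d)) d"
    by (simp add: adj cinner_self)
  then have "(norm (Ks d))\<^sup>2 = cmod (cinner (K (Ks d)) d)"
    by (metis norm_of_real abs_of_nonneg zero_le_power2)
  also have "\<dots> \<le> norm (K (Ks d)) * norm d"
    by (rule norm_cinner_le)
  finally show ?thesis .
qed

lemma Cauchy_adjoint_if_Cauchy_comp:
  fixes K Ks :: "'a::complex_inner \<Rightarrow> 'a"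
  assumes adj: "\<And>u v. cinner (K u) v = cinner u (Ks v)"
    and M: "M > 0" "\<And>n. norm (y n) \<le> M" and Cauchy: "Cauchy (\<lambda>n. K (Ks (y n)))"
  shows "Cauchy (\<lambda>n. Ks (y n))"
  unfolding Cauchy_iff
proof (intro allI impI)
  fix e :: real
  assume e: "e > 0"
  have K_diff: "K (a - b) = K a - K b" for a b
    by (rule adjoint_diff[of Ks K]) (metis adj cinner_commute)
  obtain N where N: "\<And>m n. m \<ge> N \<Longrightarrow> n \<ge> N \<Longrightarrow>
      norm (K (Ks (y m)) - K (Ks (y n))) < e\<^sup>2 / (2 * M)"
    using Cauchy e M(1) unfolding Cauchy_iff by (meson divide_pos_pos mult_pos_pos zero_less_numeral zero_less_power)
  have "norm (Ks (y m) - Ks (y n)) < e" if "m \<ge> N" "n \<ge> N" for m n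
  proof -
    define d where "d = y m - y n"
    have Ks_d: "Ks d = Ks (y m) - Ks (y n)"
      unfolding d_def by (rule adjoint_diff[OF adj])
    have "norm d \<le> 2 * M"
      unfolding d_def using norm_triangle_ineq4[of "y m" "y n"] M(2)[of m] M(2)[of n] by linarith
    then have "(norm (Ks d))\<^sup>2 \<le> norm (K (Ks d)) * (2 * M)"
      using norm_adjoint_sq_le[OF adj, of d] by (meson mult_left_mono norm_ge_zero order_trans)
    also have "\<dots> < e\<^sup>2 / (2 * M) * (2 * M)"
      using N[OF that] M(1) by (intro mult_strict_right_mono) (simp_all add: Ks_d K_diff)
    also have "\<dots> = e\<^sup>2"
      using M(1) by simp
    finally have "(norm (Ks d))\<^sup>2 < e\<^sup>2" .
    then show ?thesis
      using e Ks_d by (simp add: power_less_imp_less_base)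
  qed
  then show "\<exists>N. \<forall>m\<ge>N. \<forall>n\<ge>N. norm (Ks (y m) - Ks (y n)) < e"
    by blast
qed

lemma seq_compact_operator_adjoint:
  fixes K Ks :: "'a::complex_inner \<Rightarrow> 'a"
  assumes K: "seq_compact_operator K" and adj: "\<And>u v. cinner (K u) v = cinner u (Ks v)"
    and bounded: "\<And>x. norm (Ks x) \<le> C * norm x"
  shows "seq_compact_operator Ks"
  unfolding seq_compact_operator_def
proof (intro allI impI)
  fix y :: "nat \<Rightarrow> 'a"
  assume "bounded (range y)"
  then obtain M where M: "M > 0" "\<And>n. norm (y n) \<le> M"
    unfolding bounded_pos by auto
  have "norm (Ks (y n)) \<le> \<bar>C\<bar> * M" for n
    using bounded[of "y n"] M(2)[of n]
    by (meson abs_ge_self abs_ge_zero mult_mono norm_ge_zero order_trans)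
  then have "bounded (range (\<lambda>n. Ks (y n)))"
    unfolding bounded_iff by blast
  then obtain r where r: "strict_mono r" "Cauchy (\<lambda>n. K (Ks (y (r n))))"
    using K unfolding seq_compact_operator_def by blast
  have "Cauchy (\<lambda>n. Ks (y (r n)))"
    by (rule Cauchy_adjoint_if_Cauchy_comp[OF adj M(1) M(2) r(2)])
  then show "\<exists>r. strict_mono r \<and> Cauchy (\<lambda>n. Ks (y (r n)))"
    using r(1) by blast
qed

lemma norm_diff_orthonormal:
  fixes u v :: "'a::complex_inner"
  assumes "norm u = 1" "norm v = 1" "cinner u v = 0"
  shows "norm (u - v) = sqrt 2"
proof -
  have "cinner v u = 0"
    using assms(3) cinner_commute[of v u] by simp
  then have "cinner (u - v) (u - v) = 2"
    using assms by (simp add: cinner_diff_left cinner_diff_right cinner_self[of u] cinner_self[of v])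
  then have "(norm (u - v))\<^sup>2 = 2"
    using cinner_self[of "u - v"] by (metis of_real_eq_iff of_real_numeral)
  then show ?thesis
    by (metis norm_ge_zero real_sqrt_unique)
qed

lemma orthonormal_seq_no_Cauchy_subseq:
  fixes e :: "nat \<Rightarrow> 'a::complex_inner"
  assumes "\<And>n. norm (e n) = 1" "\<And>m n. m < n \<Longrightarrow> cinner (e m) (e n) = 0" "strict_mono r"
  shows "\<not> Cauchy (\<lambda>n. e (r n))"
proof
  assume "Cauchy (\<lambda>n. e (r n))"
  then obtain M where "norm (e (r M) - e (r (Suc M))) < 1"
    unfolding Cauchy_iff by (meson le_Suc_eq order_refl zero_less_one)
  moreover have "r M < r (Suc M)"
    using assms(3) by (simp add: strict_mono_Suc_iff)
  ultimately show False
    using norm_diff_orthonormal[OF assms(1,1) assms(2)] by simp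
qed

lemma orthonormal_seq_exists:
  fixes N :: "'a::complex_inner set"
  assumes extend: "\<And>E. finite E \<Longrightarrow> E \<subseteq> N \<Longrightarrow> orthonormal E \<Longrightarrow>
      \<exists>e\<in>N. norm e = 1 \<and> (\<forall>v\<in>E. cinner v e = 0)"
  shows "\<exists>e::nat \<Rightarrow> 'a. (\<forall>n. e n \<in> N \<and> norm (e n) = 1) \<and>
      (\<forall>m n. m < n \<longrightarrow> cinner (e m) (e n) = 0)"
proof -
  define next_vec where
    "next_vec E = (SOME e. e \<in> N \<and> norm e = 1 \<and> (\<forall>v\<in>E. cinner v e = 0))" for E
  define Es where "Es n = rec_nat {} (\<lambda>_ E. insert (next_vec E) E) n" for n
  have Es_Suc: "Es (Suc n) = insert (next_vec (Es n)) (Es n)" for n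
    by (simp add: Es_def)
  have next_vec: "next_vec E \<in> N \<and> norm (next_vec E) = 1 \<and> (\<forall>v\<in>E. cinner v (next_vec E) = 0)"
    if "finite E" "E \<subseteq> N" "orthonormal E" for E
    unfolding next_vec_def by (rule someI_ex) (use extend[OF that] in blast)
  have Es: "finite (Es n) \<and> Es n \<subseteq> N \<and> orthonormal (Es n)" for n
  proof (induction n)
    case 0
    then show ?case by (simp add: Es_def orthonormal_def)
  next
    case (Suc n)
    have nv: "next_vec (Es n) \<in> N \<and> norm (next_vec (Es n)) = 1 \<and>
        (\<forall>v\<in>Es n. cinner v (next_vec (Es n)) = 0)"
      using Suc.IH by (intro next_vec) auto
    then have "\<forall>v\<in>Es n. cinner (next_vec (Es n)) v = 0"
      by (simp add: cinner_commute[of "next_vec (Es n)"])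
    with Suc.IH nv show ?case
      unfolding Es_Suc orthonormal_def by auto
  qed
  have nv: "next_vec (Es n) \<in> N \<and> norm (next_vec (Es n)) = 1 \<and>
      (\<forall>v\<in>Es n. cinner v (next_vec (Es n)) = 0)" for n
    using Es[of n] by (intro next_vec) auto
  have mem: "m < n \<Longrightarrow> next_vec (Es m) \<in> Es n" for m n
    by (induction n) (auto simp: Es_Suc less_Suc_eq)
  show ?thesis
  proof (intro exI[of _ "\<lambda>n. next_vec (Es n)"] conjI allI impI)
    show "next_vec (Es n) \<in> N" "norm (next_vec (Es n)) = 1" for n
      using nv by blast+
    show "cinner (next_vec (Es m)) (next_vec (Es n)) = 0" if "m < n" for m n
      using nv mem[OF that] by blast
  qed
qed

lemma finite_orthonormal_basis_of_fixed_set: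
  fixes T :: "'a::complex_inner \<Rightarrow> 'a"
  assumes T: "seq_compact_operator T" and fixed: "\<And>z. z \<in> N \<Longrightarrow> T z = z"
    and scaleC: "\<And>z a. z \<in> N \<Longrightarrow> scaleC a z \<in> N"
  shows "\<exists>E. finite E \<and> E \<subseteq> N \<and> orthonormal E \<and> (\<forall>z\<in>N. (\<forall>v\<in>E. cinner v z = 0) \<longrightarrow> z = 0)"
proof (rule ccontr)
  assume no_basis: "\<not> ?thesis"
  have extend: "\<exists>e\<in>N. norm e = 1 \<and> (\<forall>v\<in>E. cinner v e = 0)"
    if "finite E" "E \<subseteq> N" "orthonormal E" for E
  proof -
    have "\<not> (\<forall>z\<in>N. (\<forall>v\<in>E. cinner v z = 0) \<longrightarrow> z = 0)"
      using no_basis that by meson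
    then obtain z where z: "z \<in> N" "\<forall>v\<in>E. cinner v z = 0" "z \<noteq> 0"
      by blast
    show ?thesis
      using z norm_scaleC_inverse_norm[OF z(3)] scaleC[OF z(1)]
      by (intro bexI[of _ "scaleC (of_real (inverse (norm z))) z"]) (auto simp: cinner_scaleC_right)
  qed
  obtain e :: "nat \<Rightarrow> 'a" where e: "\<And>n. e n \<in> N" "\<And>n. norm (e n) = 1"
    "\<And>m n. m < n \<Longrightarrow> cinner (e m) (e n) = 0"
    using orthonormal_seq_exists[OF extend] by blast
  have "bounded (range e)"
    unfolding bounded_iff using e(2) by auto
  then obtain r where r: "strict_mono r" "Cauchy (\<lambda>n. T (e (r n)))"
    using T unfolding seq_compact_operator_def by blast
  then show False
    using orthonormal_seq_no_Cauchy_subseq[of e r, OF e(2) e(3)] fixed[OF e(1)] by simp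
qed

lemma seq_compact_operator_id_minus_synth_anal_swap:
  fixes f g :: "nat \<Rightarrow> 'a::{complex_inner, complete_space}"
  assumes f: "bessel_bound f B" and g: "bessel_bound g D"
    and K: "seq_compact_operator (\<lambda>x. x - synth_anal g f x)"
  shows "seq_compact_operator (\<lambda>y. y - synth_anal f g y)"
proof (rule seq_compact_operator_adjoint[OF K])
  show "cinner (x - synth_anal g f x) y = cinner x (y - synth_anal f g y)" for x y
    by (simp add: cinner_diff_left cinner_diff_right cinner_synth_anal_left[OF f g])
  have bound: "norm (synth_anal f g y) \<le> sqrt (B * D) * norm y" for y
  proof -
    have "norm (synth_anal f g y) \<le> sqrt (B * bessel_sum g y)"
      by (rule norm_synth_anal_le[OF f]) (use g in \<open>auto simp: bessel_seq_def\<close>)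
    also have "\<dots> \<le> sqrt (B * (D * (norm y)\<^sup>2))"
      using bessel_boundD(1)[OF f] bessel_boundD(3)[OF g] by simp
    finally show ?thesis
      by (simp add: real_sqrt_mult)
  qed
  show "norm (y - synth_anal f g y) \<le> (1 + sqrt (B * D)) * norm y" for y
    using norm_triangle_ineq4[of y "synth_anal f g y"] bound[of y] by (simp add: distrib_right)
qed

section \<open>The analysis operator is bounded below off its kernel\<close>

lemma subseq_tendsto_kernel_if_bessel_sum_tendsto_0:
  fixes f g :: "nat \<Rightarrow> 'a::{complex_inner, complete_space}"
  assumes f: "bessel_seq f" and g: "bessel_bound g D"
    and K: "seq_compact_operator (\<lambda>x. x - synth_anal g f x)"
    and y: "bounded (range y)" and y0: "(\<lambda>n. bessel_sum f (y n)) \<longlonglongrightarrow> 0"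
  shows "\<exists>r l. strict_mono r \<and> (\<lambda>n. y (r n)) \<longlonglongrightarrow> l \<and> (\<forall>m. cinner (f m) l = 0)"
proof -
  obtain r where r: "strict_mono r" "Cauchy (\<lambda>n. y (r n) - synth_anal g f (y (r n)))"
    using K y unfolding seq_compact_operator_def by blast
  then obtain l where l: "(\<lambda>n. y (r n) - synth_anal g f (y (r n))) \<longlonglongrightarrow> l"
    using Cauchy_convergent_iff convergent_def by blast
  have yr0: "(\<lambda>n. bessel_sum f (y (r n))) \<longlonglongrightarrow> 0"
    using LIMSEQ_subseq_LIMSEQ[OF y0 r(1)] by (simp add: o_def)
  have "(\<lambda>n. synth_anal g f (y (r n))) \<longlonglongrightarrow> 0"
  proof (rule Lim_null_comparison)
    show "\<forall>\<^sub>F n in sequentially. norm (synth_anal g f (y (r n))) \<le> sqrt (D * bessel_sum f (y (r n)))"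
      using norm_synth_anal_le[OF g f] by simp
    show "(\<lambda>n. sqrt (D * bessel_sum f (y (r n)))) \<longlonglongrightarrow> 0"
      using tendsto_real_sqrt[OF tendsto_mult_right_zero[OF yr0, of D]] by simp
  qed
  from tendsto_add[OF l this] have lim: "(\<lambda>n. y (r n)) \<longlonglongrightarrow> l"
    by simp
  have "cinner (f m) l = 0" for m
  proof (rule LIMSEQ_unique)
    show "(\<lambda>n. cinner (f m) (y (r n))) \<longlonglongrightarrow> cinner (f m) l"
      by (rule bounded_linear.tendsto[OF bounded_linear_cinner_right lim])
    show "(\<lambda>n. cinner (f m) (y (r n))) \<longlonglongrightarrow> 0"
    proof (rule Lim_null_comparison)
      show "\<forall>\<^sub>F n in sequentially. norm (cinner (f m) (y (r n))) \<le> sqrt (bessel_sum f (y (r n)))"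
        using norm_cinner_sq_le_bessel_sum[OF f] by (simp add: real_le_rsqrt)
      show "(\<lambda>n. sqrt (bessel_sum f (y (r n)))) \<longlonglongrightarrow> 0"
        using tendsto_real_sqrt[OF yr0] by simp
    qed
  qed
  then show ?thesis
    using r(1) lim by blast
qed

lemma unit_vector_if_bessel_sum_less:
  fixes f :: "nat \<Rightarrow> 'a::complex_inner"
  assumes f: "bessel_seq f"
    and y: "\<forall>v\<in>E. cinner v y = 0" "bessel_sum f y < c * (norm y)\<^sup>2"
  shows "\<exists>u. (\<forall>v\<in>E. cinner v u = 0) \<and> norm u = 1 \<and> bessel_sum f u < c"
proof -
  have "y \<noteq> 0"
    using y(2) bessel_sum_nonneg[OF f, of y] by auto
  define u where "u = scaleC (of_real (inverse (norm y))) y"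
  have "bessel_sum f u = bessel_sum f y / (norm y)\<^sup>2"
    using bessel_sum_scaleC[OF f] by (simp add: u_def norm_inverse power_inverse divide_inverse_commute)
  then have "bessel_sum f u < c"
    using y(2) \<open>y \<noteq> 0\<close> by (simp add: divide_less_eq)
  moreover have "\<forall>v\<in>E. cinner v u = 0"
    using y(1) by (simp add: u_def cinner_scaleC_right)
  ultimately show ?thesis
    using norm_scaleC_inverse_norm[OF \<open>y \<noteq> 0\<close>] unfolding u_def by blast
qed

lemma bessel_sum_bounded_below_orthogonal:
  fixes f g :: "nat \<Rightarrow> 'a::{complex_inner, complete_space}"
  assumes f: "bessel_seq f" and g: "bessel_seq g"
    and K: "seq_compact_operator (\<lambda>x. x - synth_anal g f x)"
    and kernel: "\<And>z. (\<forall>n. cinner (f n) z = 0) \<Longrightarrow> (\<forall>v\<in>E. cinner v z = 0) \<Longrightarrow> z = 0"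
  shows "\<exists>c>0. \<forall>y. (\<forall>v\<in>E. cinner v y = 0) \<longrightarrow> c * (norm y)\<^sup>2 \<le> bessel_sum f y"
proof (rule ccontr)
  assume no_bound: "\<not> ?thesis"
  have "\<exists>y. (\<forall>v\<in>E. cinner v y = 0) \<and> norm y = 1 \<and> bessel_sum f y < inverse (real (Suc n))" for n
  proof -
    obtain y where "\<forall>v\<in>E. cinner v y = 0" "bessel_sum f y < inverse (real (Suc n)) * (norm y)\<^sup>2"
      using no_bound by (meson not_le positive_imp_inverse_positive of_nat_0_less_iff zero_less_Suc)
    then show ?thesis
      by (rule unit_vector_if_bessel_sum_less[OF f])
  qed
  then obtain y :: "nat \<Rightarrow> 'a" where y: "\<And>n. \<forall>v\<in>E. cinner v (y n) = 0" "\<And>n. norm (y n) = 1"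
    "\<And>n. bessel_sum f (y n) < inverse (real (Suc n))"
    by metis
  have "(\<lambda>n. bessel_sum f (y n)) \<longlonglongrightarrow> 0"
  proof (rule Lim_null_comparison[OF always_eventually LIMSEQ_inverse_real_of_nat], intro allI)
    show "norm (bessel_sum f (y n)) \<le> inverse (real (Suc n))" for n
      using y(3)[of n] bessel_sum_nonneg[OF f] by simp
  qed
  moreover obtain D where "bessel_bound g D"
    using g unfolding bessel_seq_def by blast
  moreover have "bounded (range y)"
    unfolding bounded_iff using y(2) by auto
  ultimately obtain r l where r: "strict_mono r" "(\<lambda>n. y (r n)) \<longlonglongrightarrow> l" "\<forall>m. cinner (f m) l = 0"
    using subseq_tendsto_kernel_if_bessel_sum_tendsto_0[OF f _ K] by blast
  have "norm l = 1"
    using tendsto_norm[OF r(2)] y(2) LIMSEQ_unique[OF tendsto_const] by fastforce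
  moreover have "cinner v l = 0" if "v \<in> E" for v
    using bounded_linear.tendsto[OF bounded_linear_cinner_right r(2), of v] y(1) that
      LIMSEQ_unique[OF tendsto_const] by fastforce
  ultimately show False
    using kernel r(3) by force
qed

section \<open>Completing a Bessel sequence to a frame\<close>

lemma bessel_sum_diff_orth_proj:
  assumes "\<And>v n. v \<in> E \<Longrightarrow> cinner (f n) v = 0"
  shows "bessel_sum f (x - orth_proj E x) = bessel_sum f x"
proof -
  have "cinner (f n) (orth_proj E x) = 0" for n
    using assms by (simp add: orth_proj_def cinner_sum_right cinner_scaleC_right)
  then show ?thesis
    by (simp add: bessel_sum_def cinner_diff_right)
qed

lemma frame_prepend_orthonormal:
  fixes f :: "nat \<Rightarrow> 'a::complex_inner"
  assumes f: "bessel_bound f (opt_bessel_bound f)"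
    and E: "finite E" "orthonormal E" "\<And>v n. v \<in> E \<Longrightarrow> cinner (f n) v = 0"
    and c: "c > 0" "\<And>y. \<forall>v\<in>E. cinner v y = 0 \<Longrightarrow> c * (norm y)\<^sup>2 \<le> bessel_sum f y"
  shows "\<exists>xs. is_frame (prepend xs f) \<and> opt_bessel_bound (prepend xs f) = opt_bessel_bound f"
proof -
  define B where "B = opt_bessel_bound f"
  have B: "B > 0" using bessel_boundD(1)[OF f] by (simp add: B_def)
  have f': "bessel_seq f" using f unfolding bessel_seq_def by blast
  obtain es where es: "set es = E" "distinct es"
    using finite_distinct_list[OF E(1)] by blast
  define h where "h = prepend (map (scaleC (of_real (sqrt B))) es) f"
  define p where "p x = (\<Sum>v\<in>E. (cmod (cinner v x))\<^sup>2)" for x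
  have h_sums: "(\<lambda>n. (cmod (cinner (h n) x))\<^sup>2) sums (B * p x + bessel_sum f x)" for x
    unfolding h_def p_def es(1)[symmetric]
    using sums_prepend_scaled[OF f' es(2), of B x] B by simp
  have norm_sq: "(norm x)\<^sup>2 = p x + (norm (x - orth_proj E x))\<^sup>2" for x
    unfolding p_def by (rule norm_sq_orth_proj[OF E(1,2)])
  have upper: "B * p x + bessel_sum f x \<le> B * (norm x)\<^sup>2" for x
    using bessel_sum_diff_orth_proj[of E f x, OF E(3)] bessel_boundD(3)[OF f, of "x - orth_proj E x"]
      norm_sq[of x] by (simp add: B_def distrib_left)
  have lower: "min B c * (norm x)\<^sup>2 \<le> B * p x + bessel_sum f x" for x
  proof -
    have "c * (norm (x - orth_proj E x))\<^sup>2 \<le> bessel_sum f x"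
      using c(2)[of "x - orth_proj E x"] cinner_diff_orth_proj[OF E(1,2)]
        bessel_sum_diff_orth_proj[of E f x, OF E(3)] by simp
    moreover have "min B c * p x \<le> B * p x"
      unfolding p_def by (intro mult_right_mono sum_nonneg) auto
    moreover have "min B c * (norm (x - orth_proj E x))\<^sup>2 \<le> c * (norm (x - orth_proj E x))\<^sup>2"
      by (intro mult_right_mono) auto
    ultimately show ?thesis
      using norm_sq[of x] by (simp add: distrib_left)
  qed
  have h: "bessel_bound h B"
    unfolding bessel_bound_def using B h_sums upper by (metis sums_summable sums_unique)
  have "is_frame h"
    unfolding is_frame_def bessel_seq_def
    using h B c(1) lower h_sums by (metis min_less_iff_conj sums_unique)
  moreover have "opt_bessel_bound h = B"
    using h unfolding h_def B_def by (rule opt_bessel_bound_prepend)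
  ultimately show ?thesis
    unfolding h_def B_def by blast
qed

lemma frame_prepend_if_seq_compact_id_minus_synth_anal:
  fixes f g :: "nat \<Rightarrow> 'a::{complex_inner, complete_space}"
  assumes inf: "infinite_dimensional TYPE('a)" and f: "bessel_seq f" and g: "bessel_seq g"
    and K: "seq_compact_operator (\<lambda>x. x - synth_anal g f x)"
  shows "\<exists>xs. is_frame (prepend xs f) \<and> opt_bessel_bound (prepend xs f) = opt_bessel_bound f"
proof -
  define N where "N = {z. \<forall>n. cinner (f n) z = 0}"
  have fixed: "x - synth_anal g f x = x" if "x \<in> N" for x
    using that by (simp add: N_def synth_anal_def)
  have scaleC_closed: "scaleC a z \<in> N" if "z \<in> N" for z a
    using that by (simp add: N_def cinner_scaleC_right)
  obtain E where E: "finite E" "E \<subseteq> N" "orthonormal E"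
    and basis: "\<forall>z\<in>N. (\<forall>v\<in>E. cinner v z = 0) \<longrightarrow> z = 0"
    using finite_orthonormal_basis_of_fixed_set[OF K fixed scaleC_closed] by blast
  have kernel: "z = 0" if "\<forall>n. cinner (f n) z = 0" "\<forall>v\<in>E. cinner v z = 0" for z
    using basis that unfolding N_def by blast
  obtain c where c: "c > 0" "\<And>y. \<forall>v\<in>E. cinner v y = 0 \<Longrightarrow> c * (norm y)\<^sup>2 \<le> bessel_sum f y"
    using bessel_sum_bounded_below_orthogonal[OF f g K kernel] by blast
  have "\<exists>m. f m \<noteq> 0"
  proof (rule ccontr)
    assume "\<nexists>m. f m \<noteq> 0"
    then have "x - orth_proj E x = 0" for x
      using kernel[of "x - orth_proj E x"] cinner_diff_orth_proj[OF E(1,3), of _ x] by simp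
    then have "x \<in> cspan E" for x
      using orth_proj_in_cspan[OF E(1), of x] by simp
    then show False
      using inf E(1) unfolding infinite_dimensional_def by blast
  qed
  then have "bessel_bound f (opt_bessel_bound f)"
    using bessel_bound_opt_bessel_bound[OF f] by blast
  moreover have "cinner (f n) v = 0" if "v \<in> E" for v n
    using E(2) that unfolding N_def by blast
  ultimately show ?thesis
    using frame_prepend_orthonormal[OF _ E(1,3) _ c] by blast
qed

theorem theorem2p4:
  fixes f g :: "nat \<Rightarrow> 'a::{complex_inner, complete_space}" and B D :: real
  assumes "infinite_dimensional TYPE('a)"
    and "separable_hilbert TYPE('a)"
    and "bessel_seq f" and "bessel_seq g"
    and "B = opt_bessel_bound f" and "D = opt_bessel_bound g"
    and "compact_operator (\<lambda>x. x - synth_anal g f x)"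
  shows "\<exists>xs ys :: 'a list.
           is_frame (prepend xs f) \<and> opt_bessel_bound (prepend xs f) = B \<and>
           is_frame (prepend ys g) \<and> opt_bessel_bound (prepend ys g) = D"
proof -
  have K: "seq_compact_operator (\<lambda>x. x - synth_anal g f x)"
    using assms(7) by (rule compact_operator_imp_seq_compact_operator)
  obtain B0 D0 where "bessel_bound f B0" "bessel_bound g D0"
    using assms(3,4) unfolding bessel_seq_def by blast
  then have K': "seq_compact_operator (\<lambda>y. y - synth_anal f g y)"
    using K by (rule seq_compact_operator_id_minus_synth_anal_swap)
  obtain xs where "is_frame (prepend xs f)" "opt_bessel_bound (prepend xs f) = B"
    using frame_prepend_if_seq_compact_id_minus_synth_anal[OF assms(1,3,4) K] assms(5) by blast
  moreover obtain ys where "is_frame (prepend ys g)" "opt_bessel_bound (prepend ys g) = D"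
    using frame_prepend_if_seq_compact_id_minus_synth_anal[OF assms(1,4,3) K'] assms(6) by blast
  ultimately show ?thesis
    by blast
qed

end
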